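(* Let $k\ge 1$ be an integer and $P$ a finite point set in the plane with $n$ points (in general position with respect to all cone directions used). For $j=0,\dots,k-1$ let $G_j$ be the half-$\theta_6$-graph of $P$ constructed with all cones rotated by $j\pi/(3k)$ radians. Then the union $G_0\cup\dots\cup G_{k-1}$ is a geometric spanner with at most $3kn$ edges and spanning ratio at most $\sqrt{3}\cos\frac{\pi}{6k}+\sin\frac{\pi}{6k}$; i.e. for all $u,w\in P$ it contains a path from $u$ to $w$ of length at most $\left(\sqrt{3}\cos\frac{\pi}{6k}+\sin\frac{\pi}{6k}\right)|uw|$.
   Context: Cones: for a point $u$, the plane is partitioned into six cones with apex $u$, bounded by the rays from $u$ at angles $j\pi/3$ ($j=0,\dots,5$) from the positive $x$-axis. In counterclockwise order starting from the positive $x$-axis they are labelled $\overline{C}_1, C_0, \overline{C}_2, C_1, \overline{C}_0, C_2$; $C_0,C_1,C_2$ are positive cones. Half-$\theta_6$-graph: for each $u\in P$ and each positive cone $C$ of $u$ containing other points, add an edge from $u$ to the point of $P$ in $C$ whose orthogonal projection onto the bisector of $C$ is closest to $u$ (each vertex thus has at most 3 such outgoing edges). A rotated version uses the same construction with all cone boundary rays rotated by the given angle. General position: no two points lie on a line parallel to any cone boundary ray used. Edge weights are Euclidean lengths. *)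

theory Defs
  imports "HOL-Analysis.Analysis"
begin

text \<open>For a rotation angle a, the cones with apex u are the six sectors
  [a + i*pi/3, a + (i+1)*pi/3), i = 0..5, in counterclockwise order, labelled
  Cbar1, C0, Cbar2, C1, Cbar0, C2. The positive cone C_c (c = 0,1,2) is sector 2c+1.\<close>

definition in_sector :: "real \<Rightarrow> nat \<Rightarrow> complex \<Rightarrow> complex \<Rightarrow> bool" where
  "in_sector a i u v \<longleftrightarrow>
     (\<exists>r \<theta>. r > 0 \<and> a + real i * pi / 3 \<le> \<theta> \<and> \<theta> < a + real (i + 1) * pi / 3
            \<and> v - u = complex_of_real r * cis \<theta>)"

definition pos_cone :: "real \<Rightarrow> nat \<Rightarrow> complex \<Rightarrow> complex \<Rightarrow> bool" where
  "pos_cone a c u v \<longleftrightarrow> in_sector a (2 * c + 1) u v"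

definition bisector :: "real \<Rightarrow> nat \<Rightarrow> real" where
  "bisector a c = a + real (2 * c + 1) * pi / 3 + pi / 6"

definition proj_bis :: "real \<Rightarrow> nat \<Rightarrow> complex \<Rightarrow> complex \<Rightarrow> real" where
  "proj_bis a c u v = Re ((v - u) * cnj (cis (bisector a c)))"

definition half_theta6_arc :: "complex set \<Rightarrow> real \<Rightarrow> complex \<Rightarrow> complex \<Rightarrow> bool" where
  "half_theta6_arc P a u w \<longleftrightarrow> u \<in> P \<and> w \<in> P \<and>
     (\<exists>c<3. pos_cone a c u w \<and>
        (\<forall>v\<in>P. pos_cone a c u v \<longrightarrow> proj_bis a c u w \<le> proj_bis a c u v))"

definition half_theta6_edges :: "complex set \<Rightarrow> real \<Rightarrow> complex set set" where
  "half_theta6_edges P a = {{u, w} | u w. half_theta6_arc P a u w}"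

definition rot_angle :: "nat \<Rightarrow> nat \<Rightarrow> real" where
  "rot_angle k j = real j * pi / (3 * real k)"

definition union_edges :: "nat \<Rightarrow> complex set \<Rightarrow> complex set set" where
  "union_edges k P = (\<Union>j<k. half_theta6_edges P (rot_angle k j))"

definition general_position :: "nat \<Rightarrow> complex set \<Rightarrow> bool" where
  "general_position k P \<longleftrightarrow>
     (\<forall>p\<in>P. \<forall>q\<in>P. \<forall>j<k. \<forall>m<6::nat. p \<noteq> q \<longrightarrow>
        \<not> (\<exists>r::real. q - p = complex_of_real r * cis (rot_angle k j + real m * pi / 3)))"

definition is_path :: "complex set set \<Rightarrow> complex list \<Rightarrow> complex \<Rightarrow> complex \<Rightarrow> bool" where
  "is_path E xs u w \<longleftrightarrow> xs \<noteq> [] \<and> hd xs = u \<and> last xs = w \<and>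
     (\<forall>i < length xs - 1. {xs ! i, xs ! Suc i} \<in> E)"

definition path_length :: "complex list \<Rightarrow> real" where
  "path_length xs = (\<Sum>i < length xs - 1. dist (xs ! i) (xs ! Suc i))"

end

theory Submission
  imports Defs
begin

text \<open>For a rotation angle a let x0, x1, x2 be the signed projections onto the bisectors of
  the positive cones C0, C1, C2. Their directions are 120 degrees apart, so
  x0 + x1 + x2 = 0, and v lies in the cone Cc of u exactly when xc increases and the other
  two coordinates decrease from u to v. Routing from u towards w in the cone Cc of u along the
  half-theta6 edge of u in Cc and recursing (on the pair (v, w) or (w, v), always with a
  smaller coordinate gain) yields a path of length at most 2/sqrt 3 times the largest sum of
  two coordinate differences |xi w - xi u|. Among the k rotations there is one for which
  the direction of uw is within pi/(6k) of a cone bisector, and for that rotation this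
  bound is (sqrt 3 cos (pi/(6k)) + sin (pi/(6k))) |uw|.\<close>

section \<open>Bisector coordinates\<close>

definition bisector_coord :: "real \<Rightarrow> nat \<Rightarrow> complex \<Rightarrow> real" where
  "bisector_coord a c v = Re (v * cnj (cis (bisector a c)))"

lemma bisector_coord_zero [simp]: "bisector_coord a c 0 = 0"
  by (simp add: bisector_coord_def)

lemma proj_bis_eq_coord_diff: "proj_bis a c u v = bisector_coord a c v - bisector_coord a c u"
  unfolding proj_bis_def bisector_coord_def by (simp add: left_diff_distrib)

lemma bisector_coord_diff_polar:
  assumes "v - u = complex_of_real r * cis t"
  shows "bisector_coord a c v - bisector_coord a c u = r * cos (t - bisector a c)"
proof -
  have "bisector_coord a c v - bisector_coord a c u = Re ((v - u) * cnj (cis (bisector a c)))"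
    unfolding bisector_coord_def by (simp add: left_diff_distrib)
  also have "\<dots> = r * cos (t - bisector a c)"
    unfolding assms by (simp add: cis_cnj mult.assoc cis_mult)
  finally show ?thesis .
qed

lemma cis_add_2pi_multiple: "cis (x + 2 * pi * real m) = cis x"
  by (simp add: cis_mult[symmetric])

lemma cis_add_thirds_mod6: "cis (x + real (n mod 6) * pi / 3) = cis (x + real n * pi / 3)"
proof -
  have n: "real n = real (n mod 6) + 6 * real (n div 6)"
    by (metis of_nat_add of_nat_mult of_nat_numeral mod_mult_div_eq)
  have "x + real n * pi / 3 = (x + real (n mod 6) * pi / 3) + 2 * pi * real (n div 6)"
    unfolding n by (simp add: field_simps)
  then show ?thesis by (simp only: cis_add_2pi_multiple)
qed

lemma cis_bisector_mod3: "cis (bisector a (n mod 3)) = cis (bisector a n)"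
proof -
  have thirds: "bisector a m = (a + pi / 6) + real (2 * m + 1) * pi / 3" for m
    by (simp add: bisector_def algebra_simps)
  have "(2 * n + 1) mod 6 = 2 * (n mod 3) + 1" by presburger
  then show ?thesis
    using cis_add_thirds_mod6[of "a + pi / 6" "2 * n + 1"] unfolding thirds by simp
qed

lemma bisector_coord_mod3: "bisector_coord a (n mod 3) v = bisector_coord a n v"
  by (simp add: bisector_coord_def cis_bisector_mod3)

lemma bisector_add: "bisector a (c + d) = bisector a c + real d * (2 * pi / 3)"
  by (simp add: bisector_def algebra_simps)

lemma cos_minus_two_pi_thirds: "cos (s - 2 * pi / 3) = - sin (pi / 6 - s)"
  by (simp add: cos_diff sin_diff cos_120 sin_120 sin_30 cos_30)

lemma cos_plus_two_pi_thirds: "cos (s + 2 * pi / 3) = - sin (pi / 6 + s)"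
  by (simp add: cos_add sin_add cos_120 sin_120 sin_30 cos_30)

lemma coord_diffs_polar:
  assumes vu: "v - u = complex_of_real r * cis (bisector a c + s)"
  shows "bisector_coord a c v - bisector_coord a c u = r * cos s"
    and "bisector_coord a ((c + 1) mod 3) v - bisector_coord a ((c + 1) mod 3) u
           = - (r * sin (pi / 6 - s))"
    and "bisector_coord a ((c + 2) mod 3) v - bisector_coord a ((c + 2) mod 3) u
           = - (r * sin (pi / 6 + s))"
proof -
  have diff: "bisector_coord a i v - bisector_coord a i u = r * cos (bisector a c + s - bisector a i)"
    for i by (rule bisector_coord_diff_polar[OF vu])
  show "bisector_coord a c v - bisector_coord a c u = r * cos s"
    using diff[of c] by simp
  have shift1: "bisector a c + s - bisector a (c + 1) = s - 2 * pi / 3"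
    using bisector_add[of a c 1] by simp
  show "bisector_coord a ((c + 1) mod 3) v - bisector_coord a ((c + 1) mod 3) u
          = - (r * sin (pi / 6 - s))"
    using diff[of "c + 1"] unfolding bisector_coord_mod3 shift1 cos_minus_two_pi_thirds by simp
  have "s + 2 * pi / 3 = (bisector a c + s - bisector a (c + 2)) + 2 * pi"
    using bisector_add[of a c 2] by (simp add: field_simps)
  then have shift2: "cos (bisector a c + s - bisector a (c + 2)) = cos (s + 2 * pi / 3)"
    by (simp only: cos_periodic)
  show "bisector_coord a ((c + 2) mod 3) v - bisector_coord a ((c + 2) mod 3) u
          = - (r * sin (pi / 6 + s))"
    using diff[of "c + 2"] unfolding bisector_coord_mod3 shift2 cos_plus_two_pi_thirds by simp
qed

lemma bisector_coord_sum:
  "bisector_coord a c v + bisector_coord a ((c + 1) mod 3) v + bisector_coord a ((c + 2) mod 3) v = 0"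
proof -
  let ?s = "Arg v - bisector a c"
  have "v - 0 = complex_of_real (cmod v) * cis (bisector a c + ?s)"
    using rcis_cmod_Arg[of v] by (simp add: rcis_def)
  note d = coord_diffs_polar[OF this]
  have sines: "cos s = sin (pi / 6 - s) + sin (pi / 6 + s)" for s
    by (simp add: sin_diff sin_add sin_30 algebra_simps)
  have "cmod v * cos ?s = cmod v * sin (pi / 6 - ?s) + cmod v * sin (pi / 6 + ?s)"
    by (subst sines) (simp add: distrib_left)
  then show ?thesis using d by simp
qed

lemma pos_cone_iff_polar:
  "pos_cone a c u v \<longleftrightarrow>
     (\<exists>r s. 0 < r \<and> - (pi / 6) \<le> s \<and> s < pi / 6 \<and> v - u = complex_of_real r * cis (bisector a c + s))"
proof
  assume "pos_cone a c u v"
  then obtain r \<theta> where r: "0 < r" and lo: "a + real (2 * c + 1) * pi / 3 \<le> \<theta>"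
    and hi: "\<theta> < a + real (2 * c + 1 + 1) * pi / 3" and vu: "v - u = complex_of_real r * cis \<theta>"
    unfolding pos_cone_def in_sector_def by blast
  show "\<exists>r s. 0 < r \<and> - (pi / 6) \<le> s \<and> s < pi / 6 \<and> v - u = complex_of_real r * cis (bisector a c + s)"
  proof (rule exI[of _ r], rule exI[of _ "\<theta> - bisector a c"], intro conjI)
    show "- (pi / 6) \<le> \<theta> - bisector a c" "\<theta> - bisector a c < pi / 6"
      using lo hi by (auto simp: bisector_def field_simps)
  qed (use r vu in simp_all)
next
  assume "\<exists>r s. 0 < r \<and> - (pi / 6) \<le> s \<and> s < pi / 6 \<and> v - u = complex_of_real r * cis (bisector a c + s)"
  then obtain r s where r: "0 < r" and s: "- (pi / 6) \<le> s" "s < pi / 6"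
    and vu: "v - u = complex_of_real r * cis (bisector a c + s)" by blast
  show "pos_cone a c u v"
    unfolding pos_cone_def in_sector_def
  proof (rule exI[of _ r], rule exI[of _ "bisector a c + s"], intro conjI)
    show "a + real (2 * c + 1) * pi / 3 \<le> bisector a c + s"
      "bisector a c + s < a + real (2 * c + 1 + 1) * pi / 3"
      using s by (auto simp: bisector_def field_simps)
  qed (use r vu in simp_all)
qed

lemma pos_cone_coords:
  assumes "pos_cone a c u v"
  shows "bisector_coord a c u < bisector_coord a c v"
    and "bisector_coord a ((c + 1) mod 3) v < bisector_coord a ((c + 1) mod 3) u"
    and "bisector_coord a ((c + 2) mod 3) v \<le> bisector_coord a ((c + 2) mod 3) u"
    and "dist u v \<le> 2 / sqrt 3 * (bisector_coord a c v - bisector_coord a c u)"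
proof -
  obtain r s where r: "0 < r" and s: "- (pi / 6) \<le> s" "s < pi / 6"
    and vu: "v - u = complex_of_real r * cis (bisector a c + s)"
    using assms pos_cone_iff_polar by blast
  note d = coord_diffs_polar[OF vu]
  have "0 < cos s" using s by (intro cos_gt_zero_pi) auto
  then show "bisector_coord a c u < bisector_coord a c v"
    using d(1) mult_pos_pos[OF r] by fastforce
  have "0 < sin (pi / 6 - s)" using s by (intro sin_gt_zero) auto
  then show "bisector_coord a ((c + 1) mod 3) v < bisector_coord a ((c + 1) mod 3) u"
    using d(2) mult_pos_pos[OF r] by fastforce
  have "0 \<le> sin (pi / 6 + s)" using s by (intro sin_ge_zero) auto
  from mult_nonneg_nonneg[OF less_imp_le[OF r] this]
  show "bisector_coord a ((c + 2) mod 3) v \<le> bisector_coord a ((c + 2) mod 3) u"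
    using d(3) by linarith
  have "dist u v = cmod (v - u)" by (metis dist_commute dist_norm)
  also have "\<dots> = r" using vu r by (simp add: norm_mult)
  finally have "dist u v = r" .
  moreover have "cos (pi / 6) \<le> cos \<bar>s\<bar>" using s by (subst cos_mono_le_eq) auto
  then have "r * (sqrt 3 / 2) \<le> r * cos s" using r by (simp add: cos_30)
  ultimately show "dist u v \<le> 2 / sqrt 3 * (bisector_coord a c v - bisector_coord a c u)"
    using d(1) by (simp add: field_simps)
qed

lemma coords_imp_pos_cone:
  assumes "bisector_coord a ((c + 1) mod 3) v < bisector_coord a ((c + 1) mod 3) u"
    and "bisector_coord a ((c + 2) mod 3) v < bisector_coord a ((c + 2) mod 3) u"
  shows "pos_cone a c u v"
proof -
  define z where "z = (v - u) * cnj (cis (bisector a c))"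
  define r where "r = cmod z"
  define s where "s = Arg z"
  have "v - u = z * cis (bisector a c)"
    unfolding z_def by (simp add: cis_cnj mult.assoc cis_mult)
  also have "z = complex_of_real r * cis s"
    using rcis_cmod_Arg[of z] by (simp add: r_def s_def rcis_def)
  finally have vu: "v - u = complex_of_real r * cis (bisector a c + s)"
    by (simp add: mult.assoc cis_mult add.commute)
  note d = coord_diffs_polar[OF vu]
  have s_range: "- pi < s" "s \<le> pi" using Arg_bounded[of z] by (auto simp: s_def)
  have "0 < r * sin (pi / 6 - s)" "0 < r * sin (pi / 6 + s)" using assms d(2,3) by linarith+
  moreover have "0 \<le> r" by (simp add: r_def)
  ultimately have r: "0 < r" and sin_pos: "0 < sin (pi / 6 - s)" "0 < sin (pi / 6 + s)"
    by (auto simp: zero_less_mult_iff)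
  have sin_nonpos: "sin x \<le> 0" if "- pi \<le> x" "x \<le> 0" for x
    using sin_ge_zero[of "- x"] that by simp
  have "s < pi / 6" using sin_nonpos[of "pi / 6 - s"] sin_pos(1) s_range by force
  moreover have "- (pi / 6) < s" using sin_nonpos[of "pi / 6 + s"] sin_pos(2) s_range by force
  ultimately have "- (pi / 6) \<le> s" "s < pi / 6" by auto
  with r vu show ?thesis unfolding pos_cone_iff_polar by blast
qed

section \<open>Cones described by coordinates\<close>

lemma less_3_cases: "(i::nat) < 3 \<Longrightarrow> i = 0 \<or> i = 1 \<or> i = 2"
  by auto

definition index_triple :: "nat \<Rightarrow> nat \<Rightarrow> nat \<Rightarrow> bool" where
  "index_triple c j k \<longleftrightarrow> c < 3 \<and> j < 3 \<and> k < 3 \<and> distinct [c, j, k]"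

lemma index_triple_cyclic: "c < 3 \<Longrightarrow> index_triple c ((c + 1) mod 3) ((c + 2) mod 3)"
  using less_3_cases[of c] by (auto simp: index_triple_def)

lemma index_triple_swap:
  "index_triple c j k \<Longrightarrow> index_triple c k j"
  "index_triple c j k \<Longrightarrow> index_triple j c k"
  by (auto simp: index_triple_def)

lemma index_triple_other: "index_triple c j k \<Longrightarrow> i < 3 \<Longrightarrow> i \<noteq> c \<Longrightarrow> i = j \<or> i = k"
  unfolding index_triple_def
  using less_3_cases[of c] less_3_cases[of j] less_3_cases[of k] less_3_cases[of i] by auto

lemma bisector_coord_sum_triple:
  assumes "index_triple c j k"
  shows "bisector_coord a c v + bisector_coord a j v + bisector_coord a k v = 0"
proof -
  have "(j = (c + 1) mod 3 \<and> k = (c + 2) mod 3) \<or> (j = (c + 2) mod 3 \<and> k = (c + 1) mod 3)"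
    using assms less_3_cases[of c] less_3_cases[of j] less_3_cases[of k]
    by (auto simp: index_triple_def)
  then show ?thesis using bisector_coord_sum[of a c v] by auto
qed

definition in_coord_cone :: "real \<Rightarrow> nat \<Rightarrow> complex \<Rightarrow> complex \<Rightarrow> bool" where
  "in_coord_cone a c u v \<longleftrightarrow> bisector_coord a c u < bisector_coord a c v \<and>
     (\<forall>i<3. i \<noteq> c \<longrightarrow> bisector_coord a i v < bisector_coord a i u)"

lemma in_coord_cone_triple:
  assumes "index_triple c j k"
  shows "in_coord_cone a c u v \<longleftrightarrow> bisector_coord a c u < bisector_coord a c v \<and>
    bisector_coord a j v < bisector_coord a j u \<and> bisector_coord a k v < bisector_coord a k u"
  using assms index_triple_other[OF assms] unfolding in_coord_cone_def index_triple_def by auto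

lemma in_coord_cone_cases:
  assumes ijk: "index_triple c j k"
    and "bisector_coord a c v < bisector_coord a c w"
    and "bisector_coord a j v \<noteq> bisector_coord a j w" "bisector_coord a k v \<noteq> bisector_coord a k w"
  shows "in_coord_cone a c v w \<or> in_coord_cone a j w v \<or> in_coord_cone a k w v"
proof -
  have jck: "index_triple j c k" and kcj: "index_triple k c j"
    using ijk by (auto simp: index_triple_def)
  show ?thesis
    unfolding in_coord_cone_triple[OF ijk] in_coord_cone_triple[OF jck] in_coord_cone_triple[OF kcj]
    using assms bisector_coord_sum_triple[OF ijk, of a v] bisector_coord_sum_triple[OF ijk, of a w]
    by (smt (verit))
qed

lemma exists_in_coord_cone:
  assumes "\<And>i. i < 3 \<Longrightarrow> bisector_coord a i u \<noteq> bisector_coord a i w"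
  obtains c where "c < 3" "in_coord_cone a c u w \<or> in_coord_cone a c w u"
proof -
  define d where "d i = bisector_coord a i w - bisector_coord a i u" for i
  have "index_triple 0 1 2" by (simp add: index_triple_def)
  have sum: "d 0 + d 1 + d 2 = 0"
    using bisector_coord_sum_triple[OF \<open>index_triple 0 1 2\<close>, of a u]
      bisector_coord_sum_triple[OF \<open>index_triple 0 1 2\<close>, of a w]
    unfolding d_def by linarith
  have signs: "0 < d 0 \<or> d 0 < 0" "0 < d 1 \<or> d 1 < 0" "0 < d 2 \<or> d 2 < 0"
    using assms[of 0] assms[of 1] assms[of 2] by (auto simp: d_def)
  have "index_triple 1 0 2" "index_triple 2 0 1" by (simp_all add: index_triple_def)
  note cone = in_coord_cone_triple[OF \<open>index_triple 0 1 2\<close>]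
    in_coord_cone_triple[OF \<open>index_triple 1 0 2\<close>] in_coord_cone_triple[OF \<open>index_triple 2 0 1\<close>]
  consider "0 < d 0 \<and> d 1 < 0 \<and> d 2 < 0 \<or> d 0 < 0 \<and> 0 < d 1 \<and> 0 < d 2"
    | "0 < d 1 \<and> d 0 < 0 \<and> d 2 < 0 \<or> d 1 < 0 \<and> 0 < d 0 \<and> 0 < d 2"
    | "0 < d 2 \<and> d 0 < 0 \<and> d 1 < 0 \<or> d 2 < 0 \<and> 0 < d 0 \<and> 0 < d 1"
    using signs sum by auto
  then show ?thesis
  proof cases
    case 1
    then show ?thesis by (intro that[of 0]) (unfold cone d_def, auto)
  next
    case 2
    then show ?thesis by (intro that[of 1]) (unfold cone d_def, auto)
  next
    case 3
    then show ?thesis by (intro that[of 2]) (unfold cone d_def, auto)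
  qed
qed

section \<open>Walks\<close>

inductive walk :: "'a::metric_space set set \<Rightarrow> 'a \<Rightarrow> 'a \<Rightarrow> real \<Rightarrow> bool" for E where
  walk_Nil: "walk E u u 0"
| walk_Cons: "{u, v} \<in> E \<Longrightarrow> walk E v w l \<Longrightarrow> walk E u w (dist u v + l)"

lemma walk_append: "walk E u v l1 \<Longrightarrow> walk E v w l2 \<Longrightarrow> walk E u w (l1 + l2)"
proof (induction rule: walk.induct)
  case (walk_Cons u v' v l)
  then have "walk E u w (dist u v' + (l + l2))" by (intro walk.walk_Cons) auto
  then show ?case by (simp add: add.assoc)
qed simp

lemma walk_sym: "walk E u w l \<Longrightarrow> walk E w u l"
proof (induction rule: walk.induct)
  case (walk_Nil u)
  show ?case by (rule walk.walk_Nil)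
next
  case (walk_Cons u v w l)
  have "{v, u} \<in> E" using walk_Cons.hyps(1) by (simp add: insert_commute)
  then have "walk E v u (dist v u)" using walk.walk_Cons[OF _ walk.walk_Nil] by fastforce
  from walk_append[OF walk_Cons.IH this] show ?case by (simp add: dist_commute add.commute)
qed

lemma walk_mono: "walk E u w l \<Longrightarrow> E \<subseteq> F \<Longrightarrow> walk F u w l"
  by (induction rule: walk.induct) (auto intro: walk.intros)

lemma path_length_Cons: "path_length (u # v # xs) = dist u v + path_length (v # xs)"
  unfolding path_length_def by (simp add: sum.lessThan_Suc_shift del: sum.lessThan_Suc)

lemma is_path_Cons: "{u, v} \<in> E \<Longrightarrow> is_path E (v # xs) v w \<Longrightarrow> is_path E (u # v # xs) u w"
  by (auto simp: is_path_def less_Suc_eq_0_disj)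

lemma walk_imp_is_path: "walk E u w l \<Longrightarrow> \<exists>xs. is_path E xs u w \<and> path_length xs = l"
proof (induction rule: walk.induct)
  case (walk_Nil u)
  show ?case by (intro exI[of _ "[u]"]) (simp add: is_path_def path_length_def)
next
  case (walk_Cons u v w l)
  then obtain xs where xs: "is_path E xs v w" "path_length xs = l" by blast
  then obtain ys where "xs = v # ys" unfolding is_path_def by (cases xs) auto
  with xs walk_Cons.hyps(1) show ?case
    by (intro exI[of _ "u # xs"]) (simp add: is_path_Cons path_length_Cons)
qed

definition short_walk :: "'a::metric_space set set \<Rightarrow> 'a \<Rightarrow> 'a \<Rightarrow> real \<Rightarrow> bool" where
  "short_walk E u w b \<longleftrightarrow> (\<exists>l. walk E u w l \<and> l \<le> b)"

lemma short_walk_refl: "0 \<le> b \<Longrightarrow> short_walk E u u b"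
  unfolding short_walk_def using walk.walk_Nil by blast

lemma short_walk_weaken: "short_walk E u w b \<Longrightarrow> b \<le> b' \<Longrightarrow> short_walk E u w b'"
  unfolding short_walk_def by force

lemma short_walk_sym: "short_walk E u w b \<Longrightarrow> short_walk E w u b"
  unfolding short_walk_def using walk_sym by blast

lemma short_walk_mono: "short_walk E u w b \<Longrightarrow> E \<subseteq> F \<Longrightarrow> short_walk F u w b"
  unfolding short_walk_def using walk_mono by blast

lemma short_walk_Cons_scaled:
  assumes "{u, v} \<in> E" "dist u v \<le> \<kappa> * d" "short_walk E v w (\<kappa> * b)" "0 \<le> \<kappa>" "d + b \<le> b'"
  shows "short_walk E u w (\<kappa> * b')"
proof -
  obtain l where l: "walk E v w l" "l \<le> \<kappa> * b"
    using assms(3) unfolding short_walk_def by blast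
  have "dist u v + l \<le> \<kappa> * (d + b)"
    using assms(2) l(2) unfolding distrib_left by linarith
  also have "\<dots> \<le> \<kappa> * b'" by (rule mult_left_mono[OF assms(5,4)])
  finally show ?thesis
    unfolding short_walk_def using walk.walk_Cons[OF assms(1) l(1)] by blast
qed

lemma short_walk_imp_path:
  "short_walk E u w b \<Longrightarrow> \<exists>xs. is_path E xs u w \<and> path_length xs \<le> b"
  unfolding short_walk_def using walk_imp_is_path by fastforce

section \<open>Routing in a single half-theta6-graph\<close>

definition coord_gain :: "real \<Rightarrow> complex \<Rightarrow> complex \<Rightarrow> real" where
  "coord_gain a p q = Max ((\<lambda>i. bisector_coord a i q - bisector_coord a i p) ` {..<3})"

lemma coord_gain_in_coord_cone:
  assumes "in_coord_cone a c p q" "c < 3"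
  shows "coord_gain a p q = bisector_coord a c q - bisector_coord a c p"
  unfolding coord_gain_def
proof (rule Max_eqI)
  show "y \<le> bisector_coord a c q - bisector_coord a c p"
    if "y \<in> (\<lambda>i. bisector_coord a i q - bisector_coord a i p) ` {..<3}" for y
    using that assms(1) unfolding in_coord_cone_def by force
qed (use assms(2) in auto)

definition coord_spread :: "real \<Rightarrow> complex \<Rightarrow> complex \<Rightarrow> real" where
  "coord_spread a u w =
     max (\<bar>bisector_coord a 0 w - bisector_coord a 0 u\<bar> + \<bar>bisector_coord a 1 w - bisector_coord a 1 u\<bar>)
      (max (\<bar>bisector_coord a 0 w - bisector_coord a 0 u\<bar> + \<bar>bisector_coord a 2 w - bisector_coord a 2 u\<bar>)
           (\<bar>bisector_coord a 1 w - bisector_coord a 1 u\<bar> + \<bar>bisector_coord a 2 w - bisector_coord a 2 u\<bar>))"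

lemma coord_spread_self [simp]: "coord_spread a u u = 0"
  by (simp add: coord_spread_def)

lemma coord_spread_commute: "coord_spread a w u = coord_spread a u w"
  by (simp add: coord_spread_def abs_minus_commute)

lemma coord_spread_ge:
  assumes "i < 3" "i' < 3" "i \<noteq> i'"
  shows "\<bar>bisector_coord a i w - bisector_coord a i u\<bar> + \<bar>bisector_coord a i' w - bisector_coord a i' u\<bar>
    \<le> coord_spread a u w"
  using less_3_cases[OF assms(1)] less_3_cases[OF assms(2)] assms(3)
  by (auto simp: coord_spread_def le_max_iff_disj)

locale theta6_general_position =
  fixes P :: "complex set" and a :: real
  assumes finite_P: "finite P"
    and coord_inj: "\<lbrakk>p \<in> P; q \<in> P; i < 3; bisector_coord a i p = bisector_coord a i q\<rbrakk> \<Longrightarrow> p = q"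
begin

abbreviation edges :: "complex set set" where
  "edges \<equiv> half_theta6_edges P a"

lemma pos_cone_iff_in_coord_cone:
  assumes u: "u \<in> P" and v: "v \<in> P" and c: "c < 3"
  shows "pos_cone a c u v \<longleftrightarrow> in_coord_cone a c u v"
  unfolding in_coord_cone_triple[OF index_triple_cyclic[OF c]]
proof
  assume cone: "pos_cone a c u v"
  then have "u \<noteq> v" using pos_cone_coords(1) by blast
  then have "bisector_coord a ((c + 2) mod 3) v \<noteq> bisector_coord a ((c + 2) mod 3) u"
    using coord_inj[OF v u, of "(c + 2) mod 3"] by auto
  then show "bisector_coord a c u < bisector_coord a c v \<and>
      bisector_coord a ((c + 1) mod 3) v < bisector_coord a ((c + 1) mod 3) u \<and>
      bisector_coord a ((c + 2) mod 3) v < bisector_coord a ((c + 2) mod 3) u"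
    using pos_cone_coords[OF cone] by auto
qed (auto intro: coords_imp_pos_cone)

lemma closest_in_cone:
  assumes u: "u \<in> P" and w: "w \<in> P" and c: "c < 3" and uw: "in_coord_cone a c u w"
  obtains v where "v \<in> P" "{u, v} \<in> edges" "in_coord_cone a c u v"
    "dist u v \<le> 2 / sqrt 3 * (bisector_coord a c v - bisector_coord a c u)"
    "\<And>z. z \<in> P \<Longrightarrow> in_coord_cone a c u z \<Longrightarrow> bisector_coord a c v \<le> bisector_coord a c z"
proof -
  define S where "S = {z \<in> P. in_coord_cone a c u z}"
  define v where "v = arg_min_on (bisector_coord a c) S"
  have fin: "finite S" and ne: "S \<noteq> {}" using finite_P w uw by (auto simp: S_def)
  have "v \<in> S" unfolding v_def by (rule arg_min_if_finite(1)[OF fin ne])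
  then have v: "v \<in> P" and uv: "in_coord_cone a c u v" by (auto simp: S_def)
  have least: "bisector_coord a c v \<le> bisector_coord a c z" if "z \<in> P" "in_coord_cone a c u z" for z
    unfolding v_def by (rule arg_min_least[OF fin ne]) (use that in \<open>simp add: S_def\<close>)
  have cone: "pos_cone a c u v" using pos_cone_iff_in_coord_cone[OF u v c] uv by blast
  have "\<forall>z\<in>P. pos_cone a c u z \<longrightarrow> proj_bis a c u v \<le> proj_bis a c u z"
    using least pos_cone_iff_in_coord_cone[OF u _ c] by (auto simp: proj_bis_eq_coord_diff)
  then have "half_theta6_arc P a u v" unfolding half_theta6_arc_def using u v c cone by blast
  then have "{u, v} \<in> edges" by (auto simp: half_theta6_edges_def)
  then show ?thesis by (rule that[OF v _ uv pos_cone_coords(4)[OF cone] least])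
qed

lemma closest_step:
  assumes u: "u \<in> P" and w: "w \<in> P" and ijk: "index_triple c j k" and uw: "in_coord_cone a c u w"
  obtains v where "v \<in> P" "{u, v} \<in> edges" "in_coord_cone a c u v"
    "dist u v \<le> 2 / sqrt 3 * (bisector_coord a c v - bisector_coord a c u)"
    "\<And>z. z \<in> P \<Longrightarrow> in_coord_cone a c u z \<Longrightarrow> bisector_coord a c v \<le> bisector_coord a c z"
    "v = w \<or> in_coord_cone a c v w \<or> in_coord_cone a j w v \<or> in_coord_cone a k w v"
proof -
  have c: "c < 3" using ijk by (simp add: index_triple_def)
  obtain v where v: "v \<in> P" "{u, v} \<in> edges" "in_coord_cone a c u v"
    "dist u v \<le> 2 / sqrt 3 * (bisector_coord a c v - bisector_coord a c u)"
    and least: "\<And>z. z \<in> P \<Longrightarrow> in_coord_cone a c u z \<Longrightarrow> bisector_coord a c v \<le> bisector_coord a c z"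
    using closest_in_cone[OF u w c uw] by blast
  have "v = w \<or> in_coord_cone a c v w \<or> in_coord_cone a j w v \<or> in_coord_cone a k w v"
  proof (cases "v = w")
    case False
    then have ne: "bisector_coord a i v \<noteq> bisector_coord a i w" if "i < 3" for i
      using coord_inj[OF v(1) w that] by blast
    have "bisector_coord a c v < bisector_coord a c w"
      using least[OF w uw] ne[OF c] by linarith
    with ijk ne show ?thesis using in_coord_cone_cases[OF ijk] by (auto simp: index_triple_def)
  qed simp
  with v least that show ?thesis by blast
qed

definition gain_rank :: "complex \<Rightarrow> complex \<Rightarrow> nat" where
  "gain_rank u w = card {(p, q) \<in> P \<times> P. coord_gain a p q < coord_gain a u w}"

lemma gain_rank_less:
  assumes "p \<in> P" "q \<in> P" "coord_gain a p q < coord_gain a u w"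
  shows "gain_rank p q < gain_rank u w"
  unfolding gain_rank_def
proof (rule psubset_card_mono)
  show "finite {(p, q) \<in> P \<times> P. coord_gain a p q < coord_gain a u w}"
    by (rule finite_subset[of _ "P \<times> P"]) (auto simp: finite_P)
qed (use assms in force)

lemma gain_rank_forward:
  assumes "v \<in> P" "w \<in> P" "c < 3" "in_coord_cone a c u w" "in_coord_cone a c v w"
    "bisector_coord a c u < bisector_coord a c v"
  shows "gain_rank v w < gain_rank u w"
  using assms by (intro gain_rank_less) (simp_all add: coord_gain_in_coord_cone)

lemma gain_rank_backward:
  assumes "w \<in> P" "v \<in> P" and ijk: "index_triple c j k"
    and "in_coord_cone a c u w" "in_coord_cone a c u v" "in_coord_cone a j w v"
  shows "gain_rank w v < gain_rank u w"
proof (rule gain_rank_less)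
  have "j < 3" "c < 3" using ijk by (auto simp: index_triple_def)
  then have "coord_gain a w v = bisector_coord a j v - bisector_coord a j w"
    "coord_gain a u w = bisector_coord a c w - bisector_coord a c u"
    using assms(4,6) by (simp_all add: coord_gain_in_coord_cone)
  moreover have "bisector_coord a j v < bisector_coord a j u" "bisector_coord a k w < bisector_coord a k u"
    using assms(4,5) by (simp_all add: in_coord_cone_triple[OF ijk])
  ultimately show "coord_gain a w v < coord_gain a u w"
    using bisector_coord_sum_triple[OF ijk, of a u] bisector_coord_sum_triple[OF ijk, of a w] by linarith
qed (use assms in auto)

text \<open>No point of P other than w lies in the triangle cut off from the cone Cc of u at the
  level of w, on the side of w where the j-th coordinate is smaller.\<close>

definition side_empty :: "nat \<Rightarrow> nat \<Rightarrow> nat \<Rightarrow> complex \<Rightarrow> complex \<Rightarrow> bool" where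
  "side_empty c j k u w \<longleftrightarrow> (\<forall>z\<in>P. z \<noteq> w \<longrightarrow> bisector_coord a c z \<le> bisector_coord a c w \<longrightarrow>
     bisector_coord a j z \<le> bisector_coord a j u \<longrightarrow> bisector_coord a k z \<le> bisector_coord a k u \<longrightarrow>
     bisector_coord a j w \<le> bisector_coord a j z)"

lemma side_empty_mono:
  assumes "side_empty c j k u w"
    and "bisector_coord a j v \<le> bisector_coord a j u" "bisector_coord a k v \<le> bisector_coord a k u"
  shows "side_empty c j k v w"
  using assms unfolding side_empty_def by (meson order_trans)

lemma side_empty_of_closest:
  assumes ijk: "index_triple c j k"
    and uw: "in_coord_cone a c u w" and uv: "in_coord_cone a c u v"
    and least: "\<And>z. z \<in> P \<Longrightarrow> in_coord_cone a c u z \<Longrightarrow> bisector_coord a c v \<le> bisector_coord a c z"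
  shows "side_empty j c k w v"
  unfolding side_empty_def
proof (intro ballI impI)
  fix z assume z: "z \<in> P" "bisector_coord a j z \<le> bisector_coord a j v"
    "bisector_coord a c z \<le> bisector_coord a c w" "bisector_coord a k z \<le> bisector_coord a k w"
  show "bisector_coord a c v \<le> bisector_coord a c z"
  proof (rule ccontr)
    assume "\<not> bisector_coord a c v \<le> bisector_coord a c z"
    have "bisector_coord a j z < bisector_coord a j u" "bisector_coord a k z < bisector_coord a k u"
      using z uw uv unfolding in_coord_cone_triple[OF ijk] by linarith+
    moreover from this have "bisector_coord a c u < bisector_coord a c z"
      using bisector_coord_sum_triple[OF ijk, of a z] bisector_coord_sum_triple[OF ijk, of a u] by linarith
    ultimately have "in_coord_cone a c u z" unfolding in_coord_cone_triple[OF ijk] by blast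
    with least[OF z(1)] \<open>\<not> bisector_coord a c v \<le> bisector_coord a c z\<close> show False by blast
  qed
qed

lemma route_side_empty:
  "u \<in> P \<Longrightarrow> w \<in> P \<Longrightarrow> index_triple c j k \<Longrightarrow> in_coord_cone a c u w \<Longrightarrow> side_empty c j k u w \<Longrightarrow>
   short_walk edges u w (2 / sqrt 3 * ((bisector_coord a c w - bisector_coord a c u)
     + (bisector_coord a j u - bisector_coord a j w)))"
proof (induct "gain_rank u w" arbitrary: u w c j k rule: less_induct)
  case less
  note u = less.prems(1) and w = less.prems(2) and ijk = less.prems(3)
    and uw = less.prems(4) and side = less.prems(5)
  have c: "c < 3" using ijk by (simp add: index_triple_def)
  obtain v where v: "v \<in> P" and edge: "{u, v} \<in> edges" and uv: "in_coord_cone a c u v"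
    and dist: "dist u v \<le> 2 / sqrt 3 * (bisector_coord a c v - bisector_coord a c u)"
    and least: "\<And>z. z \<in> P \<Longrightarrow> in_coord_cone a c u z \<Longrightarrow> bisector_coord a c v \<le> bisector_coord a c z"
    and step: "v = w \<or> in_coord_cone a c v w \<or> in_coord_cone a j w v \<or> in_coord_cone a k w v"
    using closest_step[OF u w ijk uw] by blast
  have uw': "bisector_coord a j w < bisector_coord a j u"
    using uw by (simp add: in_coord_cone_triple[OF ijk])
  have uv': "bisector_coord a c u < bisector_coord a c v" "bisector_coord a j v < bisector_coord a j u"
    "bisector_coord a k v < bisector_coord a k u"
    using uv by (simp_all add: in_coord_cone_triple[OF ijk])
  from step show ?case
  proof (elim disjE)
    assume "v = w"
    then have "short_walk edges v w (2 / sqrt 3 * 0)" by (simp add: short_walk_refl)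
    then show ?case
      by (rule short_walk_Cons_scaled[OF edge dist]) (use \<open>v = w\<close> uw' in auto)
  next
    assume vw: "in_coord_cone a c v w"
    have "short_walk edges v w (2 / sqrt 3 * ((bisector_coord a c w - bisector_coord a c v)
        + (bisector_coord a j v - bisector_coord a j w)))"
      using less.hyps[OF gain_rank_forward[OF v w c uw vw uv'(1)] v w ijk vw]
        side_empty_mono[OF side uv'(2,3)[THEN less_imp_le]] by blast
    then show ?case
      by (rule short_walk_Cons_scaled[OF edge dist]) (use uv' in auto)
  next
    assume wv: "in_coord_cone a j w v"
    have "short_walk edges w v (2 / sqrt 3 * ((bisector_coord a j v - bisector_coord a j w)
        + (bisector_coord a c w - bisector_coord a c v)))"
      using less.hyps[OF gain_rank_backward[OF w v ijk uw uv wv] w v index_triple_swap(2)[OF ijk] wv]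
        side_empty_of_closest[OF ijk uw uv least] by blast
    from short_walk_sym[OF this] show ?case
      by (rule short_walk_Cons_scaled[OF edge dist]) (use uv' in auto)
  next
    assume "in_coord_cone a k w v" \<comment> \<open>impossible: v would lie on the empty side of w\<close>
    then have "bisector_coord a j v < bisector_coord a j w"
      by (simp add: in_coord_cone_triple[OF index_triple_swap(2)[OF index_triple_swap(1)[OF ijk]]])
    moreover have "v \<noteq> w" using calculation by auto
    ultimately show ?case
      using side v least[OF w uw] uv'(2,3) unfolding side_empty_def by force
  qed
qed

lemma route_in_coord_cone:
  "u \<in> P \<Longrightarrow> w \<in> P \<Longrightarrow> index_triple c j k \<Longrightarrow> in_coord_cone a c u w \<Longrightarrow>
   short_walk edges u w (2 / sqrt 3 * ((bisector_coord a c w - bisector_coord a c u)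
     + max (bisector_coord a j u - bisector_coord a j w) (bisector_coord a k u - bisector_coord a k w)))"
proof (induct "gain_rank u w" arbitrary: u w rule: less_induct)
  case less
  note u = less.prems(1) and w = less.prems(2) and ijk = less.prems(3) and uw = less.prems(4)
  have c: "c < 3" using ijk by (simp add: index_triple_def)
  obtain v where v: "v \<in> P" and edge: "{u, v} \<in> edges" and uv: "in_coord_cone a c u v"
    and dist: "dist u v \<le> 2 / sqrt 3 * (bisector_coord a c v - bisector_coord a c u)"
    and least: "\<And>z. z \<in> P \<Longrightarrow> in_coord_cone a c u z \<Longrightarrow> bisector_coord a c v \<le> bisector_coord a c z"
    and step: "v = w \<or> in_coord_cone a c v w \<or> in_coord_cone a j w v \<or> in_coord_cone a k w v"
    using closest_step[OF u w ijk uw] by blast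
  have uw': "bisector_coord a j w < bisector_coord a j u"
    using uw by (simp add: in_coord_cone_triple[OF ijk])
  have uv': "bisector_coord a c u < bisector_coord a c v" "bisector_coord a j v < bisector_coord a j u"
    "bisector_coord a k v < bisector_coord a k u"
    using uv by (simp_all add: in_coord_cone_triple[OF ijk])
  have via_other_cone: "short_walk edges u w (2 / sqrt 3 * ((bisector_coord a c w - bisector_coord a c u)
      + (bisector_coord a i u - bisector_coord a i w)))"
    if cil: "index_triple c i l" and wv: "in_coord_cone a i w v" for i l
  proof -
    have "short_walk edges w v (2 / sqrt 3 * ((bisector_coord a i v - bisector_coord a i w)
        + (bisector_coord a c w - bisector_coord a c v)))"
      by (rule route_side_empty[OF w v index_triple_swap(2)[OF cil] wv
            side_empty_of_closest[OF cil uw uv least]])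
    from short_walk_sym[OF this] show ?thesis
      by (rule short_walk_Cons_scaled[OF edge dist]) (use uv in \<open>auto simp: in_coord_cone_triple[OF cil]\<close>)
  qed
  from step show ?case
  proof (elim disjE)
    assume "v = w"
    then have "short_walk edges v w (2 / sqrt 3 * 0)" by (simp add: short_walk_refl)
    then show ?case
      by (rule short_walk_Cons_scaled[OF edge dist]) (use \<open>v = w\<close> uw' in \<open>auto simp: le_max_iff_disj\<close>)
  next
    assume vw: "in_coord_cone a c v w"
    have max_le: "max (bisector_coord a j v - bisector_coord a j w) (bisector_coord a k v - bisector_coord a k w)
        \<le> max (bisector_coord a j u - bisector_coord a j w) (bisector_coord a k u - bisector_coord a k w)"
      using uv'(2,3) by (intro max.mono) auto
    have "short_walk edges v w (2 / sqrt 3 * ((bisector_coord a c w - bisector_coord a c v)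
        + max (bisector_coord a j v - bisector_coord a j w) (bisector_coord a k v - bisector_coord a k w)))"
      by (rule less.hyps[OF gain_rank_forward[OF v w c uw vw uv'(1)] v w ijk vw])
    then show ?case
      by (rule short_walk_Cons_scaled[OF edge dist]) (use max_le in auto)
  next
    assume "in_coord_cone a j w v"
    from via_other_cone[OF ijk this] show ?case
      by (rule short_walk_weaken) (rule mult_left_mono, simp_all add: le_max_iff_disj)
  next
    assume "in_coord_cone a k w v"
    from via_other_cone[OF index_triple_swap(1)[OF ijk] this] show ?case
      by (rule short_walk_weaken) (rule mult_left_mono, simp_all add: le_max_iff_disj)
  qed
qed

lemma short_walk_in_coord_cone:
  assumes u: "u \<in> P" and w: "w \<in> P" and c: "c < 3" and uw: "in_coord_cone a c u w"
  shows "short_walk edges u w (2 / sqrt 3 * coord_spread a u w)"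
proof -
  let ?j = "(c + 1) mod 3" and ?k = "(c + 2) mod 3"
  have ijk: "index_triple c ?j ?k" by (rule index_triple_cyclic[OF c])
  have "\<bar>bisector_coord a c w - bisector_coord a c u\<bar> = bisector_coord a c w - bisector_coord a c u"
    "\<bar>bisector_coord a ?j w - bisector_coord a ?j u\<bar> = bisector_coord a ?j u - bisector_coord a ?j w"
    "\<bar>bisector_coord a ?k w - bisector_coord a ?k u\<bar> = bisector_coord a ?k u - bisector_coord a ?k w"
    using uw by (auto simp: in_coord_cone_triple[OF ijk])
  moreover have "?j \<noteq> c" "?k \<noteq> c" using ijk by (auto simp: index_triple_def)
  ultimately have "(bisector_coord a c w - bisector_coord a c u)
      + max (bisector_coord a ?j u - bisector_coord a ?j w) (bisector_coord a ?k u - bisector_coord a ?k w)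
      \<le> coord_spread a u w"
    using coord_spread_ge[of c ?j a w u] coord_spread_ge[of c ?k a w u] c by (simp add: max_def)
  then show ?thesis
    by (rule short_walk_weaken[OF route_in_coord_cone[OF u w ijk uw] mult_left_mono]) simp
qed

lemma short_walk_coord_spread:
  assumes u: "u \<in> P" and w: "w \<in> P"
  shows "short_walk edges u w (2 / sqrt 3 * coord_spread a u w)"
proof (cases "u = w")
  case True
  then show ?thesis by (simp add: short_walk_refl)
next
  case False
  then have "bisector_coord a i u \<noteq> bisector_coord a i w" if "i < 3" for i
    using coord_inj[OF u w that] by blast
  then obtain c where c: "c < 3" and "in_coord_cone a c u w \<or> in_coord_cone a c w u"
    by (rule exists_in_coord_cone)
  then show ?thesis
  proof (elim disjE)
    assume "in_coord_cone a c w u"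
    from short_walk_sym[OF short_walk_in_coord_cone[OF w u c this]] show ?thesis
      by (simp add: coord_spread_commute)
  qed (rule short_walk_in_coord_cone[OF u w c])
qed

text \<open>A half-theta6 edge is determined by its source and its cone.\<close>

lemma card_half_theta6_edges: "card edges \<le> 3 * card P"
proof -
  define is_nb where "is_nb u c w \<longleftrightarrow> w \<in> P \<and> pos_cone a c u w \<and>
    (\<forall>v\<in>P. pos_cone a c u v \<longrightarrow> proj_bis a c u w \<le> proj_bis a c u v)" for u c w
  define nb where "nb u c = (SOME w. is_nb u c w)" for u c
  have sub: "edges \<subseteq> (\<lambda>(u, c). {u, nb u c}) ` (P \<times> {..<3})"
  proof
    fix e assume "e \<in> edges"
    then obtain u w c where e: "e = {u, w}" and u: "u \<in> P" and c: "c < 3" and w: "is_nb u c w"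
      unfolding half_theta6_edges_def half_theta6_arc_def is_nb_def by blast
    have nb: "is_nb u c (nb u c)" unfolding nb_def by (rule someI[of "is_nb u c", OF w])
    then have "proj_bis a c u (nb u c) = proj_bis a c u w"
      using w unfolding is_nb_def by (meson order_antisym)
    then have "nb u c = w"
      using coord_inj[OF _ _ c] nb w unfolding is_nb_def by (simp add: proj_bis_eq_coord_diff)
    then show "e \<in> (\<lambda>(u, c). {u, nb u c}) ` (P \<times> {..<3})" using e u c by force
  qed
  have "card edges \<le> card (P \<times> {..<3::nat})"
    by (rule surj_card_le[OF _ sub]) (simp add: finite_P)
  then show ?thesis by (simp add: card_cartesian_product mult.commute)
qed

end

lemma coord_inj_general_position:
  assumes gp: "general_position k P" and j: "j < k" and p: "p \<in> P" and q: "q \<in> P" and i: "i < 3"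
    and eq: "bisector_coord (rot_angle k j) i p = bisector_coord (rot_angle k j) i q"
  shows "p = q"
proof (rule ccontr)
  assume pq: "p \<noteq> q"
  define \<beta> where "\<beta> = bisector (rot_angle k j) i"
  define z where "z = (q - p) * cnj (cis \<beta>)"
  have "Re z = 0" using eq unfolding z_def \<beta>_def bisector_coord_def by (simp add: left_diff_distrib)
  then have z: "z = complex_of_real (Im z) * \<i>" by (simp add: complex_eq_iff)
  have "q - p = z * cis \<beta>" unfolding z_def by (simp add: cis_cnj mult.assoc cis_mult)
  also have "\<dots> = complex_of_real (Im z) * cis (\<beta> + pi / 2)"
    by (subst z) (simp add: cis_mult[symmetric] mult.assoc)
  finally have qp: "q - p = complex_of_real (Im z) * cis (\<beta> + pi / 2)" .
  have "\<beta> + pi / 2 = rot_angle k j + real (2 * i + 3) * pi / 3"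
    unfolding \<beta>_def bisector_def by (simp add: field_simps)
  then have "cis (\<beta> + pi / 2) = cis (rot_angle k j + real ((2 * i + 3) mod 6) * pi / 3)"
    by (simp only: cis_add_thirds_mod6)
  with qp have "q - p = complex_of_real (Im z) * cis (rot_angle k j + real ((2 * i + 3) mod 6) * pi / 3)"
    by simp
  moreover have "(2 * i + 3) mod 6 < 6" by simp
  ultimately show False using gp j p q pq unfolding general_position_def by blast
qed

lemma theta6_general_position_rotation:
  assumes "finite P" "general_position k P" "j < k"
  shows "theta6_general_position P (rot_angle k j)"
  by (rule theta6_general_position.intro) (use assms coord_inj_general_position in blast)+

section \<open>Choosing the rotation\<close>

lemma abs_cos_add_int_pi: "\<bar>cos (x + real_of_int q * pi)\<bar> = \<bar>cos x\<bar>"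
proof -
  have s: "sin (real_of_int q * pi) = 0" unfolding sin_zero_iff_int2 by blast
  have "cos (real_of_int q * pi) ^ 2 = 1" using sin_cos_squared_add[of "real_of_int q * pi"] s by simp
  then have "\<bar>cos (real_of_int q * pi)\<bar> = 1" by (auto simp: power2_eq_1_iff)
  then show ?thesis by (simp add: cos_add s abs_mult)
qed

lemma abs_cos_thirds:
  assumes "\<bar>\<phi>\<bar> \<le> pi / 6"
  shows "\<bar>cos (real_of_int n * pi / 3 + \<phi>)\<bar> =
    (if n mod 3 = 0 then cos \<phi> else if n mod 3 = 1 then cos (pi / 3 + \<phi>) else cos (pi / 3 - \<phi>))"
proof -
  define \<rho> where "\<rho> = n mod 3"
  have n: "real_of_int n = real_of_int \<rho> + 3 * real_of_int (n div 3)"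
    unfolding \<rho>_def by (metis of_int_add of_int_mult of_int_numeral mod_mult_div_eq)
  have "real_of_int n * pi / 3 + \<phi> = (real_of_int \<rho> * pi / 3 + \<phi>) + real_of_int (n div 3) * pi"
    unfolding n by (simp add: field_simps)
  then have "\<bar>cos (real_of_int n * pi / 3 + \<phi>)\<bar> = \<bar>cos (real_of_int \<rho> * pi / 3 + \<phi>)\<bar>"
    by (simp only: abs_cos_add_int_pi)
  moreover have "\<rho> = 0 \<or> \<rho> = 1 \<or> \<rho> = 2" unfolding \<rho>_def by auto
  moreover have "0 \<le> cos \<phi>" "0 \<le> cos (pi / 3 + \<phi>)" "0 \<le> cos (pi / 3 - \<phi>)"
    using assms by (auto intro!: cos_ge_zero)
  moreover have "cos (2 * pi / 3 + \<phi>) = - cos (pi / 3 - \<phi>)"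
    using cos_pi_minus[of "pi / 3 - \<phi>"] by (simp add: field_simps)
  ultimately show ?thesis unfolding \<rho>_def[symmetric] by auto
qed

lemma abs_cos_thirds_pair:
  assumes \<phi>: "\<bar>\<phi>\<bar> \<le> pi / 6" and "n mod 3 \<noteq> n' mod 3"
  shows "\<bar>cos (real_of_int n * pi / 3 + \<phi>)\<bar> + \<bar>cos (real_of_int n' * pi / 3 + \<phi>)\<bar>
    \<le> cos \<bar>\<phi>\<bar> + cos (pi / 3 - \<bar>\<phi>\<bar>)"
proof -
  have "cos (pi / 3 + \<phi>) \<le> cos (pi / 3 - \<bar>\<phi>\<bar>)" "cos (pi / 3 - \<phi>) \<le> cos (pi / 3 - \<bar>\<phi>\<bar>)"
    using \<phi> by (subst cos_mono_le_eq; auto)+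
  moreover have "0 \<le> cos (pi / 3 - \<bar>\<phi>\<bar>)" using \<phi> by (intro cos_ge_zero) auto
  moreover have "cos (pi / 3 + \<phi>) + cos (pi / 3 - \<phi>) = cos \<phi>" by (simp add: cos_add cos_diff cos_60)
  moreover have "n mod 3 \<in> {0, 1, 2}" "n' mod 3 \<in> {0, 1, 2}" by auto
  ultimately show ?thesis using assms(2) unfolding abs_cos_thirds[OF \<phi>] by auto
qed

text \<open>Here the direction of uw makes the angle \<phi> with the bisector of one of the six cones
  (positive or negative) of rotation a.\<close>

lemma coord_spread_polar:
  assumes wu: "w - u = complex_of_real r * cis (a + pi / 6 + real_of_int m * pi / 3 + \<phi>)"
    and r: "0 \<le> r" and \<phi>: "\<bar>\<phi>\<bar> \<le> pi / 6"
  shows "2 / sqrt 3 * coord_spread a u w \<le> r * (sqrt 3 * cos \<bar>\<phi>\<bar> + sin \<bar>\<phi>\<bar>)"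
proof -
  define n where "n i = m - 2 * int i - 1" for i :: nat
  have coord: "\<bar>bisector_coord a i w - bisector_coord a i u\<bar> = r * \<bar>cos (real_of_int (n i) * pi / 3 + \<phi>)\<bar>"
    for i
  proof -
    have "a + pi / 6 + real_of_int m * pi / 3 + \<phi> - bisector a i = real_of_int (n i) * pi / 3 + \<phi>"
      unfolding n_def bisector_def by (simp add: field_simps)
    with bisector_coord_diff_polar[OF wu, of a i] show ?thesis
      using r by (simp add: abs_mult)
  qed
  define G where "G = cos \<bar>\<phi>\<bar> + cos (pi / 3 - \<bar>\<phi>\<bar>)"
  have pair: "\<bar>bisector_coord a i w - bisector_coord a i u\<bar> + \<bar>bisector_coord a i' w - bisector_coord a i' u\<bar>
      \<le> r * G" if "i < 3" "i' < 3" "i \<noteq> i'" for i i'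
  proof -
    have "n i mod 3 \<noteq> n i' mod 3" using that unfolding n_def by presburger
    then have "r * (\<bar>cos (real_of_int (n i) * pi / 3 + \<phi>)\<bar> + \<bar>cos (real_of_int (n i') * pi / 3 + \<phi>)\<bar>) \<le> r * G"
      unfolding G_def by (intro mult_left_mono abs_cos_thirds_pair[OF \<phi>] r)
    then show ?thesis unfolding coord distrib_left .
  qed
  have "coord_spread a u w \<le> r * G"
    unfolding coord_spread_def using pair[of 0 1] pair[of 0 2] pair[of 1 2] by simp
  then have "2 / sqrt 3 * coord_spread a u w \<le> 2 / sqrt 3 * (r * G)" by (rule mult_left_mono) simp
  also have "\<dots> = r * (sqrt 3 * cos \<bar>\<phi>\<bar> + sin \<bar>\<phi>\<bar>)"
  proof -
    have G_eq: "G = 3 / 2 * cos \<bar>\<phi>\<bar> + sqrt 3 / 2 * sin \<bar>\<phi>\<bar>"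
      unfolding G_def by (simp add: cos_diff cos_60 sin_60)
    show ?thesis unfolding G_eq by (simp add: field_simps)
  qed
  finally show ?thesis .
qed

lemma sqrt3_cos_plus_sin_mono:
  assumes "0 \<le> s" "s \<le> t" "t \<le> pi / 6"
  shows "sqrt 3 * cos s + sin s \<le> sqrt 3 * cos t + sin t"
proof -
  have e: "sqrt 3 * cos x + sin x = 2 * cos (pi / 6 - x)" for x
    by (simp add: cos_diff cos_30 sin_30)
  have "cos (pi / 6 - s) \<le> cos (pi / 6 - t)" using assms by (subst cos_mono_le_eq) auto
  then show ?thesis unfolding e by simp
qed

text \<open>The bisector directions of the 6k cones of all k rotations are spaced pi/(3k) apart.\<close>

lemma exists_rotation_near_bisector:
  assumes k: "1 \<le> k"
  obtains j m \<phi> where "j < k" "\<bar>\<phi>\<bar> \<le> pi / (6 * real k)"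
    "\<theta> = rot_angle k j + pi / 6 + real_of_int m * pi / 3 + \<phi>"
proof -
  define \<delta> where "\<delta> = pi / (3 * real k)"
  have \<delta>: "0 < \<delta>" "\<delta> * real k = pi / 3" using k by (auto simp: \<delta>_def field_simps)
  define x where "x = (\<theta> - pi / 6) / \<delta>"
  define N where "N = \<lfloor>x + 1 / 2\<rfloor>"
  define \<phi> where "\<phi> = \<theta> - pi / 6 - real_of_int N * \<delta>"
  have "real_of_int N \<le> x + 1 / 2" "x + 1 / 2 < real_of_int N + 1" unfolding N_def by linarith+
  then have "\<bar>x - real_of_int N\<bar> \<le> 1 / 2" by linarith
  moreover have "\<bar>\<phi>\<bar> = \<delta> * \<bar>x - real_of_int N\<bar>"
    unfolding \<phi>_def x_def using \<delta>(1) by (simp add: field_simps flip: abs_mult)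
  ultimately have "\<bar>\<phi>\<bar> \<le> \<delta> * (1 / 2)" using \<delta>(1) by (simp add: mult_left_mono)
  then have \<phi>_le: "\<bar>\<phi>\<bar> \<le> pi / (6 * real k)" by (simp add: \<delta>_def)
  define m where "m = N div int k"
  define j where "j = nat (N mod int k)"
  have "0 \<le> N mod int k" "N mod int k < int k" using k by auto
  then have j: "j < k" and jN: "int j = N mod int k" unfolding j_def by auto
  have "N = m * int k + int j" unfolding jN m_def by simp
  then have "real_of_int N * \<delta> = real_of_int m * (\<delta> * real k) + real j * \<delta>"
    by (simp add: algebra_simps)
  then have "\<theta> = rot_angle k j + pi / 6 + real_of_int m * pi / 3 + \<phi>"
    using \<delta>(2) unfolding \<phi>_def rot_angle_def \<delta>_def by simp
  with j \<phi>_le show ?thesis by (rule that)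
qed

lemma exists_rotation_spread_bound:
  assumes k: "1 \<le> k"
  obtains j where "j < k" "2 / sqrt 3 * coord_spread (rot_angle k j) u w
    \<le> (sqrt 3 * cos (pi / (6 * real k)) + sin (pi / (6 * real k))) * dist u w"
proof -
  obtain j m \<phi> where j: "j < k" and \<phi>: "\<bar>\<phi>\<bar> \<le> pi / (6 * real k)"
    and \<theta>: "Arg (w - u) = rot_angle k j + pi / 6 + real_of_int m * pi / 3 + \<phi>"
    by (rule exists_rotation_near_bisector[OF k])
  have "w - u = complex_of_real (cmod (w - u)) * cis (Arg (w - u))"
    using rcis_cmod_Arg[of "w - u"] by (simp add: rcis_def)
  then have wu: "w - u = complex_of_real (dist u w) * cis (rot_angle k j + pi / 6 + real_of_int m * pi / 3 + \<phi>)"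
    unfolding \<theta> by (simp add: dist_norm norm_minus_commute)
  have t6: "pi / (6 * real k) \<le> pi / 6" using k by (simp add: field_simps)
  have "2 / sqrt 3 * coord_spread (rot_angle k j) u w \<le> dist u w * (sqrt 3 * cos \<bar>\<phi>\<bar> + sin \<bar>\<phi>\<bar>)"
    by (rule coord_spread_polar[OF wu]) (use \<phi> t6 in auto)
  also have "\<dots> \<le> dist u w * (sqrt 3 * cos (pi / (6 * real k)) + sin (pi / (6 * real k)))"
    by (intro mult_left_mono sqrt3_cos_plus_sin_mono) (use \<phi> t6 in auto)
  finally show ?thesis using that[OF j] by (simp add: mult.commute)
qed

theorem corollary2:
  fixes k n :: nat and P :: "complex set"
  assumes "k \<ge> 1" and "finite P" and "card P = n" and "general_position k P"
  shows "card (union_edges k P) \<le> 3 * k * n \<and>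
    (\<forall>u\<in>P. \<forall>w\<in>P. \<exists>xs. is_path (union_edges k P) xs u w \<and>
       path_length xs \<le> (sqrt 3 * cos (pi / (6 * real k)) + sin (pi / (6 * real k))) * dist u w)"
proof -
  have G: "theta6_general_position P (rot_angle k j)" if "j < k" for j
    using assms(2,4) that by (rule theta6_general_position_rotation)
  have "card (union_edges k P) \<le> (\<Sum>j<k. card (half_theta6_edges P (rot_angle k j)))"
    unfolding union_edges_def by (rule card_UN_le) simp
  also have "\<dots> \<le> (\<Sum>j<k. 3 * n)"
    using theta6_general_position.card_half_theta6_edges[OF G] assms(3) by (intro sum_mono) auto
  also have "\<dots> = 3 * k * n" by (simp add: algebra_simps)
  finally have card: "card (union_edges k P) \<le> 3 * k * n" .
  have "\<exists>xs. is_path (union_edges k P) xs u w \<and>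
      path_length xs \<le> (sqrt 3 * cos (pi / (6 * real k)) + sin (pi / (6 * real k))) * dist u w"
    if u: "u \<in> P" and w: "w \<in> P" for u w
  proof -
    obtain j where j: "j < k" and bound: "2 / sqrt 3 * coord_spread (rot_angle k j) u w
        \<le> (sqrt 3 * cos (pi / (6 * real k)) + sin (pi / (6 * real k))) * dist u w"
      by (rule exists_rotation_spread_bound[OF assms(1)])
    have "half_theta6_edges P (rot_angle k j) \<subseteq> union_edges k P"
      unfolding union_edges_def using j by blast
    with theta6_general_position.short_walk_coord_spread[OF G[OF j] u w] bound
    show ?thesis by (blast intro: short_walk_imp_path short_walk_mono short_walk_weaken)
  qed
  with card show ?thesis by blast
qed

end
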